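(* For every field $\mathbb{F}$, every $n^d\times n^d$ matrix $M$ over $\mathbb{F}$ and every $\kappa\subseteq[d]$, \[\mathrm{rank}(M^{\top_\kappa})\le n^{2\min\{|\kappa|,\,d-|\kappa|\}}\,\mathrm{rank}(M).\]
   Context: Rows and columns are indexed by $[n]^d$. For $k\in[d]$, $M^{\top_k}_{(i_1,\dots,i_d),(j_1,\dots,j_d)}=M_{(\dots,i_{k-1},j_k,i_{k+1},\dots),(\dots,j_{k-1},i_k,j_{k+1},\dots)}$ (swap the $k$-th row and column indices); $M^{\top_\kappa}$ is the composition over $k\in\kappa$. *)

theory Defs
  imports "Jordan_Normal_Form.DL_Rank"
begin

text \<open>Multi-indices in [n]^d (0-based: coordinates 0..d-1, entries 0..n-1) are encoded
  as numbers in {0..<n^d} via base-n digits: the tuple (i_0,...,i_(d-1)) corresponds to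
  the sum of i_k * n^k.\<close>

definition digit :: "nat \<Rightarrow> nat \<Rightarrow> nat \<Rightarrow> nat" where
  "digit n k r = (r div n ^ k) mod n"

definition mix_index :: "nat \<Rightarrow> nat \<Rightarrow> nat set \<Rightarrow> nat \<Rightarrow> nat \<Rightarrow> nat" where
  "mix_index n d \<kappa> r c = (\<Sum>k<d. (if k \<in> \<kappa> then digit n k c else digit n k r) * n ^ k)"

text \<open>Partial transpose M^{T_kappa}: swap the k-th row and column index for all k in kappa.\<close>
definition partial_transpose :: "nat \<Rightarrow> nat \<Rightarrow> nat set \<Rightarrow> 'a mat \<Rightarrow> 'a mat" where
  "partial_transpose n d \<kappa> M =
     mat (n ^ d) (n ^ d) (\<lambda>(i, j). M $$ (mix_index n d \<kappa> i j, mix_index n d \<kappa> j i))"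

end

theory Submission
  imports Defs
begin

text \<open>Write M as a sum of r = rank M products u_t(i) v_t(j). The (i,j) entry of M^{T_\<kappa>} is then
  the sum over t of u_t(i off \<kappa>, j on \<kappa>) v_t(j off \<kappa>, i on \<kappa>). Once the \<kappa>-digits a of i
  and b of j are fixed, each term factors into a function of i times a function of j, so
  M^{T_\<kappa>} is a sum of n^(2|\<kappa>|) r such products and has rank at most n^(2|\<kappa>|) r. Since
  M^{T_\<kappa>} is the partial transpose of M^T over the complement of \<kappa>, and M^T also has rank r,
  the bound holds with d - |\<kappa>| in place of |\<kappa>| as well.\<close>

lemma (in vec_space) rank_mat_sum_products_le:
  assumes "finite T"
  shows "rank (mat n nc (\<lambda>(i, j). \<Sum>t\<in>T. f i t * g t j)) \<le> card T"
  using assms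
proof (induction T rule: finite_induct)
  case empty
  have "mat n nc (\<lambda>(i, j). \<Sum>t\<in>{}. f i t * g t j) = 0\<^sub>m n nc"
    by (rule eq_matI) auto
  then show ?case by (simp only: rank_0I card.empty order_refl)
next
  case (insert x T)
  let ?R = "mat n nc (\<lambda>(i, j). f i x * g x j)"
  let ?S = "mat n nc (\<lambda>(i, j). \<Sum>t\<in>T. f i t * g t j)"
  have "mat n nc (\<lambda>(i, j). \<Sum>t\<in>insert x T. f i t * g t j) = ?R + ?S"
    using insert.hyps by (intro eq_matI) auto
  moreover have "rank ?R \<le> 1"
    by (rule rank_le_1_product_entries[of _ nc "\<lambda>i. f i x" "\<lambda>j. g x j"]) auto
  moreover have "rank (?R + ?S) \<le> rank ?R + rank ?S"
    by (rule rank_subadditive) auto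
  ultimately show ?case using insert by simp
qed

lemma (in vec_space) column_basis_exists:
  assumes A: "A \<in> carrier_mat n nc"
  obtains S where "finite S" "S \<subseteq> carrier_vec n" "card S = rank A" "set (cols A) \<subseteq> span S"
proof -
  have cols: "set (cols A) \<subseteq> carrier_vec n"
    using A cols_dim by blast
  have "lin_indpt {}"
    unfolding lin_dep_def by blast
  then obtain S where "finite S" and max: "maximal S (\<lambda>T. T \<subseteq> set (cols A) \<and> lin_indpt T)"
    using maximal_exists_superset[of "set (cols A)" "\<lambda>T. T \<subseteq> set (cols A) \<and> lin_indpt T" "{}"]
    by blast
  then have S: "S \<subseteq> set (cols A)" "lin_indpt S"
    unfolding maximal_def by auto
  have spans: "v \<in> span S" if v: "v \<in> set (cols A)" for v
  proof (rule ccontr)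
    assume "v \<notin> span S"
    moreover have "v \<notin> S"
      using \<open>v \<notin> span S\<close> in_own_span S(1) cols by blast
    ultimately have "lin_indpt (S \<union> {v})"
      using lin_dep_iff_in_span[of S v] S cols v by blast
    then have "S \<union> {v} = S"
      using max S(1) v unfolding maximal_def by blast
    with \<open>v \<notin> S\<close> show False by blast
  qed
  show ?thesis
  proof (rule that)
    show "S \<subseteq> carrier_vec n"
      using S(1) cols by blast
    show "card S = rank A"
      using rank_card_indpt[OF A max] by simp
    show "set (cols A) \<subseteq> span S"
      using spans by blast
  qed fact
qed

lemma (in vec_space) rank_decomposition:
  assumes A: "A \<in> carrier_mat n nc"
  obtains S :: "'a vec set" and g where "finite S" "card S = rank A"
    "A = mat n nc (\<lambda>(i, j). \<Sum>v\<in>S. v $ i * g v j)"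
proof -
  obtain S where S: "finite S" "S \<subseteq> carrier_vec n" "card S = rank A" "set (cols A) \<subseteq> span S"
    using column_basis_exists[OF A] .
  have "\<exists>a. col A j = lincomb a S" if "j < nc" for j
    using finite_in_span[OF S(1)] S(2,4) that A
    by (metis cols_length cols_nth carrier_matD(2) nth_mem subsetD)
  then obtain a where a: "\<And>j. j < nc \<Longrightarrow> col A j = lincomb (a j) S"
    by metis
  have "A = mat n nc (\<lambda>(i, j). \<Sum>v\<in>S. v $ i * a j v)"
  proof (rule eq_matI)
    fix i j assume ij: "i < dim_row (mat n nc (\<lambda>(i, j). \<Sum>v\<in>S. v $ i * a j v))"
      "j < dim_col (mat n nc (\<lambda>(i, j). \<Sum>v\<in>S. v $ i * a j v))"
    then have "A $$ (i, j) = lincomb (a j) S $ i"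
      using A a by (metis carrier_matD index_col dim_col_mat(1) dim_row_mat(1))
    also have "\<dots> = (\<Sum>v\<in>S. v $ i * a j v)"
      using lincomb_index[of i S "a j"] ij S(2) by (simp add: mult.commute)
    finally show "A $$ (i, j) = mat n nc (\<lambda>(i, j). \<Sum>v\<in>S. v $ i * a j v) $$ (i, j)"
      using ij by simp
  qed (use A in auto)
  then show ?thesis
    by (rule that[OF S(1,3)])
qed

lemma rank_transpose_le:
  fixes A :: "'a::field mat"
  assumes A: "A \<in> carrier_mat nr nc"
  shows "vec_space.rank nc (transpose_mat A) \<le> vec_space.rank nr A"
proof -
  obtain S :: "'a vec set" and g where S: "finite S" "card S = vec_space.rank nr A"
    and A_eq: "A = mat nr nc (\<lambda>(i, j). \<Sum>v\<in>S. v $ i * g v j)"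
    using vec_space.rank_decomposition[OF A] by blast
  have "transpose_mat A = mat nc nr (\<lambda>(i, j). \<Sum>v\<in>S. g v i * v $ j)"
    unfolding A_eq by (intro eq_matI) (simp_all add: mult.commute)
  then have "vec_space.rank nc (transpose_mat A) \<le> card S"
    by (simp only: vec_space.rank_mat_sum_products_le[OF S(1)])
  then show ?thesis
    unfolding S(2) .
qed

lemma rank_transpose:
  fixes A :: "'a::field mat"
  assumes "A \<in> carrier_mat nr nc"
  shows "vec_space.rank nc (transpose_mat A) = vec_space.rank nr A"
  using rank_transpose_le[OF assms] rank_transpose_le[of "transpose_mat A" nc nr] assms
  by fastforce

lemma digit_less:
  assumes "i < n ^ d" "k < d"
  shows "digit n k i < n"
proof -
  have "n \<noteq> 0"
    using assms by (metis gr_implies_not0 power_0_left)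
  then show ?thesis
    unfolding digit_def by simp
qed

lemma base_expansion_less:
  fixes n :: nat
  assumes "\<And>k. k < d \<Longrightarrow> c k < n"
  shows "(\<Sum>k<d. c k * n ^ k) < n ^ d"
  using assms
proof (induction d)
  case 0
  then show ?case by simp
next
  case (Suc d)
  have "(\<Sum>k<Suc d. c k * n ^ k) < n ^ d + c d * n ^ d"
    using Suc by simp
  also have "\<dots> \<le> n * n ^ d"
    using Suc.prems[of d] mult_le_mono1[of "Suc (c d)" n "n ^ d"] by simp
  finally show ?case by simp
qed

lemma mix_index_less:
  assumes "i < n ^ d" "j < n ^ d"
  shows "mix_index n d \<kappa> i j < n ^ d"
  unfolding mix_index_def using assms by (intro base_expansion_less) (simp add: digit_less)

lemma mix_index_complement: "mix_index n d \<kappa> i j = mix_index n d ({0..<d} - \<kappa>) j i"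
  unfolding mix_index_def by (intro sum.cong) auto

lemma partial_transpose_complement:
  assumes "M \<in> carrier_mat (n ^ d) (n ^ d)"
  shows "partial_transpose n d \<kappa> M = partial_transpose n d ({0..<d} - \<kappa>) (transpose_mat M)"
  unfolding partial_transpose_def using assms
  by (intro eq_matI) (auto simp: mix_index_less simp flip: mix_index_complement)

definition digits_on :: "nat \<Rightarrow> nat set \<Rightarrow> nat \<Rightarrow> nat \<Rightarrow> nat" where
  "digits_on n L i = restrict (\<lambda>k. digit n k i) L"

definition replace_digits :: "nat \<Rightarrow> nat \<Rightarrow> nat set \<Rightarrow> (nat \<Rightarrow> nat) \<Rightarrow> nat \<Rightarrow> nat" where
  "replace_digits n d L b i = (\<Sum>k<d. (if k \<in> L then b k else digit n k i) * n ^ k)"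

lemma mix_index_eq_replace_digits:
  "mix_index n d L i j = replace_digits n d L (digits_on n L j) i"
  unfolding mix_index_def replace_digits_def digits_on_def by (intro sum.cong) auto

lemma digits_on_in_PiE:
  assumes "i < n ^ d" "L \<subseteq> {0..<d}"
  shows "digits_on n L i \<in> L \<rightarrow>\<^sub>E {0..<n}"
  using assms digit_less unfolding digits_on_def by auto

lemma partial_transpose_mat_sum_products:
  fixes p :: "nat \<Rightarrow> 't \<Rightarrow> 'a::comm_semiring_1" and q :: "'t \<Rightarrow> nat \<Rightarrow> 'a"
  assumes T: "finite T" and L: "L \<subseteq> {0..<d}"
  obtains F G where
    "partial_transpose n d L (mat (n ^ d) (n ^ d) (\<lambda>(i, j). \<Sum>t\<in>T. p i t * q t j)) =
       mat (n ^ d) (n ^ d)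
         (\<lambda>(i, j). \<Sum>s\<in>(L \<rightarrow>\<^sub>E {0..<n}) \<times> (L \<rightarrow>\<^sub>E {0..<n}) \<times> T. F i s * G s j)"
proof
  let ?P = "L \<rightarrow>\<^sub>E {0..<n}"
  define F where
    "F i = (\<lambda>(a, b, t). if a = digits_on n L i then p (replace_digits n d L b i) t else 0)" for i
  define G where
    "G = (\<lambda>(a, b, t) j. if b = digits_on n L j then q t (replace_digits n d L a j) else 0)"
  show "partial_transpose n d L (mat (n ^ d) (n ^ d) (\<lambda>(i, j). \<Sum>t\<in>T. p i t * q t j)) =
      mat (n ^ d) (n ^ d) (\<lambda>(i, j). \<Sum>s\<in>?P \<times> ?P \<times> T. F i s * G s j)" (is "?PT = ?R")
  proof (rule eq_matI)
    fix i j assume "i < dim_row ?R" "j < dim_col ?R"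
    then have ij: "i < n ^ d" "j < n ^ d"
      by auto
    let ?a = "digits_on n L i" and ?b = "digits_on n L j"
    have "(\<Sum>s\<in>?P \<times> ?P \<times> T. F i s * G s j) = (\<Sum>s\<in>{?a} \<times> {?b} \<times> T. F i s * G s j)"
    proof (rule sum.mono_neutral_right)
      show "finite (?P \<times> ?P \<times> T)"
        using finite_subset[OF L] T by (simp add: finite_PiE)
      show "{?a} \<times> {?b} \<times> T \<subseteq> ?P \<times> ?P \<times> T"
        using digits_on_in_PiE[OF _ L] ij by blast
    qed (auto simp: F_def G_def split: if_splits)
    also have "\<dots> = (\<Sum>t\<in>T. F i (?a, ?b, t) * G (?a, ?b, t) j)"
      by (rule sum.reindex_bij_witness[where i = "\<lambda>t. (?a, ?b, t)" and j = "\<lambda>(_, _, t). t"]) auto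
    also have "\<dots> = (\<Sum>t\<in>T. p (mix_index n d L i j) t * q t (mix_index n d L j i))"
      by (simp add: F_def G_def mix_index_eq_replace_digits)
    finally show "?PT $$ (i, j) = ?R $$ (i, j)"
      using ij by (simp add: partial_transpose_def mix_index_less)
  qed (simp_all add: partial_transpose_def)
qed

lemma rank_partial_transpose_mat_sum_products_le:
  fixes p :: "nat \<Rightarrow> 't \<Rightarrow> 'a::field" and q :: "'t \<Rightarrow> nat \<Rightarrow> 'a"
  assumes T: "finite T" and L: "L \<subseteq> {0..<d}"
  shows "vec_space.rank (n ^ d)
           (partial_transpose n d L (mat (n ^ d) (n ^ d) (\<lambda>(i, j). \<Sum>t\<in>T. p i t * q t j)))
         \<le> n ^ (2 * card L) * card T"
proof -
  let ?P = "L \<rightarrow>\<^sub>E {0..<n}"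
  have "finite L"
    using L finite_subset by blast
  obtain F G where PT:
    "partial_transpose n d L (mat (n ^ d) (n ^ d) (\<lambda>(i, j). \<Sum>t\<in>T. p i t * q t j)) =
       mat (n ^ d) (n ^ d) (\<lambda>(i, j). \<Sum>s\<in>?P \<times> ?P \<times> T. F i s * G s j)"
    using partial_transpose_mat_sum_products[OF T L] .
  have "vec_space.rank (n ^ d) (mat (n ^ d) (n ^ d) (\<lambda>(i, j). \<Sum>s\<in>?P \<times> ?P \<times> T. F i s * G s j))
      \<le> card (?P \<times> ?P \<times> T)"
    using \<open>finite L\<close> T by (intro vec_space.rank_mat_sum_products_le) (simp add: finite_PiE)
  also have "\<dots> = n ^ (2 * card L) * card T"
    using \<open>finite L\<close>
    by (simp add: card_cartesian_product card_PiE power_mult power2_eq_square power_mult_distrib)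
  finally show ?thesis
    unfolding PT .
qed

lemma rank_partial_transpose_le:
  fixes M :: "'a::field mat"
  assumes M: "M \<in> carrier_mat (n ^ d) (n ^ d)" and L: "L \<subseteq> {0..<d}"
  shows "vec_space.rank (n ^ d) (partial_transpose n d L M)
           \<le> n ^ (2 * card L) * vec_space.rank (n ^ d) M"
proof -
  obtain S :: "'a vec set" and g where S: "finite S" "card S = vec_space.rank (n ^ d) M"
    and M_eq: "M = mat (n ^ d) (n ^ d) (\<lambda>(i, j). \<Sum>v\<in>S. v $ i * g v j)"
    using vec_space.rank_decomposition[OF M] by blast
  show ?thesis
    using rank_partial_transpose_mat_sum_products_le[OF S(1) L, of n "\<lambda>i v. v $ i" g]
    unfolding S(2) M_eq[symmetric] .
qed

theorem lemma3p8:
  fixes M :: "'a::field mat" and n d :: nat and \<kappa> :: "nat set"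
  assumes "M \<in> carrier_mat (n ^ d) (n ^ d)"
    and "\<kappa> \<subseteq> {0..<d}"
  shows "vec_space.rank (n ^ d) (partial_transpose n d \<kappa> M)
           \<le> n ^ (2 * min (card \<kappa>) (d - card \<kappa>)) * vec_space.rank (n ^ d) M"
proof -
  let ?rank = "vec_space.rank (n ^ d)" and ?K = "{0..<d} - \<kappa>"
  have "?rank (partial_transpose n d \<kappa> M) \<le> n ^ (2 * card \<kappa>) * ?rank M"
    using rank_partial_transpose_le[OF assms] .
  moreover have "?rank (partial_transpose n d \<kappa> M) \<le> n ^ (2 * card ?K) * ?rank M"
    using rank_partial_transpose_le[of "transpose_mat M" n d ?K] rank_transpose[OF assms(1)] assms(1)
    unfolding partial_transpose_complement[OF assms(1)] by simp
  moreover have "card ?K = d - card \<kappa>"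
    using assms(2) by (simp add: card_Diff_subset finite_subset)
  ultimately show ?thesis
    by (simp add: min_def)
qed

end
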